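(* Consider the single-task common ground mechanism (context), under the assumption that $X_A$ and $X_B$ are independent conditional on $Y$. Then truth-telling is a Bayesian Nash equilibrium; if moreover the prior is stable, truth-telling is a strict Bayesian Nash equilibrium (for every $x_A$, given that Bob is truthful, any report $\hat{\mathbf{p}}_{x_A}\ne\mathbf{p}_{x_A}$ yields Alice strictly smaller conditional expected payment, and symmetrically for Bob). Moreover, when both agents are truthful, each agent's expected payment equals the Shannon mutual information $I(X_A;X_B)=\sum_{x_A,x_B}\Pr[X_A=x_A,X_B=x_B]\log K(x_A,x_B)\ge 0$.
   Context: Let $\Sigma_A,\Sigma_B,\Sigma$ be finite nonempty sets and $(X_A,X_B,Y)$ random variables with values in $\Sigma_A\times\Sigma_B\times\Sigma$ (joint law = the prior), with all marginal probabilities positive. $\Delta_\Sigma$ is the set of probability vectors on $\Sigma$. $K(x_A,x_B):=\frac{\Pr[X_A=x_A,X_B=x_B]}{\Pr[X_A=x_A]\Pr[X_B=x_B]}$. Alice privately observes $X_A=x_A$, Bob observes $X_B=x_B$; their truthful reports are $\mathbf{p}_{x_A}:=(\Pr[Y=y\mid X_A=x_A])_y$ and $\mathbf{p}_{x_B}:=(\Pr[Y=y\mid X_B=x_B])_y$. A strategy maps the private signal to a (possibly random) report in $\Delta_\Sigma$. Common ground mechanism: given the prior $(\Pr[Y=y])_y$ and reports $\hat{\mathbf{p}}_{x_A},\hat{\mathbf{p}}_{x_B}$, both agents are paid $\log\sum_y\frac{\hat{\mathbf{p}}_{x_A}(y)\hat{\mathbf{p}}_{x_B}(y)}{\Pr[Y=y]}$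 (with $\log 0=-\infty$). Stable prior: consider the system in unknowns $\mathbf{a}^{x_A},\mathbf{b}^{x_B},\mathbf{r}\in\Delta_\Sigma$: $\sum_y a^{x_A}_yb^{x_B}_y/r_y=K(x_A,x_B)$ for all $(x_A,x_B)$. The prior is stable if, with $\mathbf{a}^{x_A}=\mathbf{p}_{x_A}$ for all $x_A$ and $\mathbf{r}=(\Pr[Y=y])_y$ fixed, the unique solution $\{\mathbf{b}^{x_B}\}$ is $\mathbf{b}^{x_B}=\mathbf{p}_{x_B}$, and with $\mathbf{b}^{x_B}=\mathbf{p}_{x_B}$ and $\mathbf{r}=(\Pr[Y=y])_y$ fixed, the unique solution $\{\mathbf{a}^{x_A}\}$ is $\mathbf{a}^{x_A}=\mathbf{p}_{x_A}$. *)

theory Defs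
  imports Complex_Main "HOL-Library.Extended_Real"
begin

text \<open>The prior is a joint probability mass function P on finite types:
  P xa xb y = Pr[X_A = xa, X_B = xb, Y = y].\<close>

definition simplex :: "('c::finite \<Rightarrow> real) set" where
  "simplex = {q. (\<forall>y. 0 \<le> q y) \<and> (\<Sum>y\<in>UNIV. q y) = 1}"

definition prA :: "('a::finite \<Rightarrow> 'b::finite \<Rightarrow> 'c::finite \<Rightarrow> real) \<Rightarrow> 'a \<Rightarrow> real" where
  "prA P xa = (\<Sum>xb\<in>UNIV. \<Sum>y\<in>UNIV. P xa xb y)"

definition prB :: "('a::finite \<Rightarrow> 'b::finite \<Rightarrow> 'c::finite \<Rightarrow> real) \<Rightarrow> 'b \<Rightarrow> real" where
  "prB P xb = (\<Sum>xa\<in>UNIV. \<Sum>y\<in>UNIV. P xa xb y)"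

definition prY :: "('a::finite \<Rightarrow> 'b::finite \<Rightarrow> 'c::finite \<Rightarrow> real) \<Rightarrow> 'c \<Rightarrow> real" where
  "prY P y = (\<Sum>xa\<in>UNIV. \<Sum>xb\<in>UNIV. P xa xb y)"

definition prAB :: "('a::finite \<Rightarrow> 'b::finite \<Rightarrow> 'c::finite \<Rightarrow> real) \<Rightarrow> 'a \<Rightarrow> 'b \<Rightarrow> real" where
  "prAB P xa xb = (\<Sum>y\<in>UNIV. P xa xb y)"

text \<open>Truthful reports: p_{x_A}(y) = Pr[Y=y | X_A=x_A], p_{x_B}(y) = Pr[Y=y | X_B=x_B].\<close>
definition postA :: "('a::finite \<Rightarrow> 'b::finite \<Rightarrow> 'c::finite \<Rightarrow> real) \<Rightarrow> 'a \<Rightarrow> 'c \<Rightarrow> real" where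
  "postA P xa y = (\<Sum>xb\<in>UNIV. P xa xb y) / prA P xa"

definition postB :: "('a::finite \<Rightarrow> 'b::finite \<Rightarrow> 'c::finite \<Rightarrow> real) \<Rightarrow> 'b \<Rightarrow> 'c \<Rightarrow> real" where
  "postB P xb y = (\<Sum>xa\<in>UNIV. P xa xb y) / prB P xb"

definition Kfun :: "('a::finite \<Rightarrow> 'b::finite \<Rightarrow> 'c::finite \<Rightarrow> real) \<Rightarrow> 'a \<Rightarrow> 'b \<Rightarrow> real" where
  "Kfun P xa xb = prAB P xa xb / (prA P xa * prB P xb)"

definition cond_indep :: "('a::finite \<Rightarrow> 'b::finite \<Rightarrow> 'c::finite \<Rightarrow> real) \<Rightarrow> bool" where
  "cond_indep P \<longleftrightarrow>
     (\<forall>xa xb y. P xa xb y * prY P y = (\<Sum>xb'\<in>UNIV. P xa xb' y) * (\<Sum>xa'\<in>UNIV. P xa' xb y))"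

definition cg_payment :: "('a::finite \<Rightarrow> 'b::finite \<Rightarrow> 'c::finite \<Rightarrow> real)
    \<Rightarrow> ('c \<Rightarrow> real) \<Rightarrow> ('c \<Rightarrow> real) \<Rightarrow> ereal" where
  "cg_payment P qa qb =
     (let s = (\<Sum>y\<in>UNIV. qa y * qb y / prY P y) in if s = 0 then -\<infinity> else ereal (ln s))"

definition alice_exp :: "('a::finite \<Rightarrow> 'b::finite \<Rightarrow> 'c::finite \<Rightarrow> real) \<Rightarrow> 'a \<Rightarrow> ('c \<Rightarrow> real) \<Rightarrow> ereal" where
  "alice_exp P xa q = (\<Sum>xb\<in>UNIV. ereal (prAB P xa xb / prA P xa) * cg_payment P q (postB P xb))"

definition bob_exp :: "('a::finite \<Rightarrow> 'b::finite \<Rightarrow> 'c::finite \<Rightarrow> real) \<Rightarrow> 'b \<Rightarrow> ('c \<Rightarrow> real) \<Rightarrow> ereal" where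
  "bob_exp P xb q = (\<Sum>xa\<in>UNIV. ereal (prAB P xa xb / prB P xb) * cg_payment P (postA P xa) q)"

definition truthful_exp :: "('a::finite \<Rightarrow> 'b::finite \<Rightarrow> 'c::finite \<Rightarrow> real) \<Rightarrow> ereal" where
  "truthful_exp P = (\<Sum>xa\<in>UNIV. \<Sum>xb\<in>UNIV. ereal (prAB P xa xb) * cg_payment P (postA P xa) (postB P xb))"

definition mutual_info :: "('a::finite \<Rightarrow> 'b::finite \<Rightarrow> 'c::finite \<Rightarrow> real) \<Rightarrow> real" where
  "mutual_info P = (\<Sum>xa\<in>UNIV. \<Sum>xb\<in>UNIV.
     if prAB P xa xb = 0 then 0 else prAB P xa xb * ln (Kfun P xa xb))"

definition stable_prior :: "('a::finite \<Rightarrow> 'b::finite \<Rightarrow> 'c::finite \<Rightarrow> real) \<Rightarrow> bool" where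
  "stable_prior P \<longleftrightarrow>
     (\<forall>b :: 'b \<Rightarrow> 'c \<Rightarrow> real.
        (\<forall>xb. b xb \<in> simplex) \<and>
        (\<forall>xa xb. (\<Sum>y\<in>UNIV. postA P xa y * b xb y / prY P y) = Kfun P xa xb)
        \<longrightarrow> b = postB P) \<and>
     (\<forall>a :: 'a \<Rightarrow> 'c \<Rightarrow> real.
        (\<forall>xa. a xa \<in> simplex) \<and>
        (\<forall>xa xb. (\<Sum>y\<in>UNIV. a xa y * postB P xb y / prY P y) = Kfun P xa xb)
        \<longrightarrow> a = postA P)"

end

theory Submission imports Defs begin

text \<open>For a report \<open>q\<close> of Alice write \<open>f(x\<^sub>B) = \<Sum>\<^sub>y q(y) p\<^sub>x\<^sub>B(y) / Pr[y]\<close>. Then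
  \<open>Pr[x\<^sub>B | x\<^sub>A] = Pr[x\<^sub>B] K(x\<^sub>A,x\<^sub>B)\<close>, conditional independence makes the truthful report give
  \<open>f = K(x\<^sub>A,-)\<close>, and every report satisfies
  \<open>\<Sum>\<^sub>x\<^sub>B Pr[x\<^sub>B] f(x\<^sub>B) = \<Sum>\<^sub>y q(y) = 1 = \<Sum>\<^sub>x\<^sub>B Pr[x\<^sub>B] K(x\<^sub>A,x\<^sub>B)\<close>.
  Hence Alice's expected payment \<open>\<Sum>\<^sub>x\<^sub>B Pr[x\<^sub>B] K log f\<close> is bounded termwise, via
  \<open>K log f \<le> K log K + f - K\<close>, by its truthful value, with equality only if \<open>f = K(x\<^sub>A,-)\<close>;
  stability says exactly that this forces \<open>q = p\<^sub>x\<^sub>A\<close>. Bob's case is Alice's case for the prior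
  with the agents exchanged. The same inequality with \<open>f = 1\<close> shows that the mutual
  information is nonnegative.\<close>

definition ereal_ln :: "real \<Rightarrow> ereal" where
  "ereal_ln s = (if s = 0 then -\<infinity> else ereal (ln s))"

lemma ln_weighted_le:
  fixes k f :: real
  assumes "0 < k" "0 < f"
  shows "k * ln f \<le> k * ln k + f - k"
    and "k * ln f = k * ln k + f - k \<longleftrightarrow> f = k"
proof -
  have scale: "k * ln f - (k * ln k + f - k) = k * (ln (f / k) - (f / k - 1))"
    using assms by (simp add: ln_div field_simps)
  have "ln (f / k) \<le> f / k - 1"
    using assms by (intro ln_le_minus_one) simp
  then show "k * ln f \<le> k * ln k + f - k"
    using scale assms by (smt (verit) mult_nonneg_nonpos)
  have "ln (f / k) = f / k - 1 \<longleftrightarrow> f = k"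
    using assms ln_eq_minus_one[of "f / k"] by auto
  then show "k * ln f = k * ln k + f - k \<longleftrightarrow> f = k"
    using scale assms by auto
qed

lemma ereal_ln_weighted_le:
  fixes c k f :: real
  assumes "0 < c" "0 \<le> k" "0 \<le> f"
  shows "ereal (c * k) * ereal_ln f \<le> ereal (c * (k * ln k + f - k))"
    and "ereal (c * k) * ereal_ln f = ereal (c * (k * ln k + f - k)) \<longleftrightarrow> f = k"
proof -
  consider "k = 0" | "0 < k" "f = 0" | "0 < k" "0 < f"
    using assms by linarith
  then have "ereal (c * k) * ereal_ln f \<le> ereal (c * (k * ln k + f - k)) \<and>
    (ereal (c * k) * ereal_ln f = ereal (c * (k * ln k + f - k)) \<longleftrightarrow> f = k)"
  proof cases
    case 1
    then show ?thesis using assms by (auto simp: zero_ereal_def[symmetric])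
  next
    case 2
    then show ?thesis using assms by (simp add: ereal_ln_def)
  next
    case 3
    have "c * (k * ln f) \<le> c * (k * ln k + f - k)"
      using ln_weighted_le(1)[OF 3] assms by (simp add: mult_left_mono)
    moreover have "c * (k * ln f) = c * (k * ln k + f - k) \<longleftrightarrow> f = k"
      using ln_weighted_le(2)[OF 3] assms by simp
    ultimately show ?thesis using 3 by (simp add: ereal_ln_def mult.assoc)
  qed
  then show "ereal (c * k) * ereal_ln f \<le> ereal (c * (k * ln k + f - k))"
    and "ereal (c * k) * ereal_ln f = ereal (c * (k * ln k + f - k)) \<longleftrightarrow> f = k"
    by auto
qed

lemma sum_ereal_less:
  assumes "finite S" "\<And>x. x \<in> S \<Longrightarrow> a x \<le> ereal (b x)" "z \<in> S" "a z < ereal (b z)"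
  shows "sum a S < ereal (sum b S)"
proof -
  have rest: "sum a (S - {z}) \<le> ereal (sum b (S - {z}))"
    unfolding sum_ereal[symmetric] using assms(2) by (intro sum_mono) auto
  have "sum a S = a z + sum a (S - {z})"
    using assms(1,3) by (rule sum.remove)
  also have "\<dots> \<le> a z + ereal (sum b (S - {z}))"
    using rest by (rule add_left_mono)
  also have "\<dots> < ereal (b z) + ereal (sum b (S - {z}))"
    using ereal_less_add[of "ereal (sum b (S - {z}))" "a z" "ereal (b z)"] assms(4)
    by (simp add: add.commute)
  also have "\<dots> = ereal (sum b S)"
    using assms(1,3) by (simp add: sum.remove)
  finally show ?thesis .
qed

lemma sum_ereal_ln_weighted_le:
  assumes "finite S" "\<And>x. x \<in> S \<Longrightarrow> 0 < c x \<and> 0 \<le> k x \<and> 0 \<le> f x"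
  shows "(\<Sum>x\<in>S. ereal (c x * k x) * ereal_ln (f x))
           \<le> ereal (\<Sum>x\<in>S. c x * (k x * ln (k x) + f x - k x))"
    and "(\<Sum>x\<in>S. ereal (c x * k x) * ereal_ln (f x))
           = ereal (\<Sum>x\<in>S. c x * (k x * ln (k x) + f x - k x)) \<longleftrightarrow> (\<forall>x\<in>S. f x = k x)"
proof -
  have term_le: "ereal (c x * k x) * ereal_ln (f x) \<le> ereal (c x * (k x * ln (k x) + f x - k x))"
    if "x \<in> S" for x
    using assms(2)[OF that] by (intro ereal_ln_weighted_le(1)) auto
  show "(\<Sum>x\<in>S. ereal (c x * k x) * ereal_ln (f x))
              \<le> ereal (\<Sum>x\<in>S. c x * (k x * ln (k x) + f x - k x))"
    unfolding sum_ereal[symmetric] by (intro sum_mono term_le)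
  show "(\<Sum>x\<in>S. ereal (c x * k x) * ereal_ln (f x))
          = ereal (\<Sum>x\<in>S. c x * (k x * ln (k x) + f x - k x)) \<longleftrightarrow> (\<forall>x\<in>S. f x = k x)"
  proof
    assume eq: "(\<Sum>x\<in>S. ereal (c x * k x) * ereal_ln (f x))
                  = ereal (\<Sum>x\<in>S. c x * (k x * ln (k x) + f x - k x))"
    show "\<forall>x\<in>S. f x = k x"
    proof (rule ccontr)
      assume "\<not> (\<forall>x\<in>S. f x = k x)"
      then obtain z where z: "z \<in> S" "f z \<noteq> k z" by blast
      have "ereal (c z * k z) * ereal_ln (f z) < ereal (c z * (k z * ln (k z) + f z - k z))"
        using term_le[OF z(1)] ereal_ln_weighted_le(2)[of "c z" "k z" "f z"] assms(2)[OF z(1)] z(2)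
        by (simp add: order_less_le)
      then have "(\<Sum>x\<in>S. ereal (c x * k x) * ereal_ln (f x))
                   < ereal (\<Sum>x\<in>S. c x * (k x * ln (k x) + f x - k x))"
        by (intro sum_ereal_less[OF assms(1) _ z(1)] term_le)
      then show False using eq by simp
    qed
  next
    assume "\<forall>x\<in>S. f x = k x"
    then have "ereal (c x * k x) * ereal_ln (f x) = ereal (c x * (k x * ln (k x) + f x - k x))"
      if "x \<in> S" for x
      using ereal_ln_weighted_le(2)[of "c x" "k x" "f x"] assms(2)[OF that] that by blast
    then show "(\<Sum>x\<in>S. ereal (c x * k x) * ereal_ln (f x))
                 = ereal (\<Sum>x\<in>S. c x * (k x * ln (k x) + f x - k x))"
      unfolding sum_ereal[symmetric] by (rule sum.cong[OF refl])
  qed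
qed

lemma diff_one_le_mult_ln:
  fixes k :: real
  assumes "0 \<le> k"
  shows "k - 1 \<le> k * ln k"
proof (cases "k = 0")
  case False
  then have "0 < k" using assms by simp
  then show ?thesis using ln_weighted_le(1)[of k 1] by simp
qed simp

definition cg_score :: "('a::finite \<Rightarrow> 'b::finite \<Rightarrow> 'c::finite \<Rightarrow> real)
    \<Rightarrow> ('c \<Rightarrow> real) \<Rightarrow> ('c \<Rightarrow> real) \<Rightarrow> real" where
  "cg_score P qa qb = (\<Sum>y\<in>UNIV. qa y * qb y / prY P y)"

lemma cg_payment_eq: "cg_payment P qa qb = ereal_ln (cg_score P qa qb)"
  unfolding cg_payment_def cg_score_def ereal_ln_def Let_def ..

locale cg_prior =
  fixes P :: "'a::finite \<Rightarrow> 'b::finite \<Rightarrow> 'c::finite \<Rightarrow> real"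
  assumes nonneg: "\<And>xa xb y. 0 \<le> P xa xb y"
    and posA: "\<And>xa. 0 < prA P xa"
    and posB: "\<And>xb. 0 < prB P xb"
    and posY: "\<And>y. 0 < prY P y"
    and ci: "cond_indep P"
begin

lemma prAB_nonneg: "0 \<le> prAB P xa xb"
  unfolding prAB_def by (simp add: sum_nonneg nonneg)

lemma Kfun_nonneg: "0 \<le> Kfun P xa xb"
  unfolding Kfun_def using prAB_nonneg posA[of xa] posB[of xb] by simp

lemma prAB_eq: "prAB P xa xb = prA P xa * prB P xb * Kfun P xa xb"
  unfolding Kfun_def using posA[of xa] posB[of xb] by simp

lemma postB_simplex: "postB P xb \<in> simplex"
proof -
  have "(\<Sum>y\<in>UNIV. \<Sum>xa\<in>UNIV. P xa xb y) = prB P xb"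
    unfolding prB_def by (rule sum.swap)
  then show ?thesis using posB[of xb]
    unfolding simplex_def postB_def
    by (auto simp: sum_divide_distrib[symmetric] sum_nonneg nonneg)
qed

lemma postA_simplex: "postA P xa \<in> simplex"
proof -
  have "(\<Sum>y\<in>UNIV. \<Sum>xb\<in>UNIV. P xa xb y) = prA P xa"
    unfolding prA_def by (rule sum.swap)
  then show ?thesis using posA[of xa]
    unfolding simplex_def postA_def
    by (auto simp: sum_divide_distrib[symmetric] sum_nonneg nonneg)
qed

lemma cg_score_nonneg: "qa \<in> simplex \<Longrightarrow> 0 \<le> cg_score P qa (postB P xb)"
  unfolding cg_score_def using postB_simplex[of xb] posY
  by (auto simp: simplex_def intro!: sum_nonneg divide_nonneg_pos)

lemma cg_score_truthful: "cg_score P (postA P xa) (postB P xb) = Kfun P xa xb"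
proof -
  have "postA P xa y * postB P xb y / prY P y = P xa xb y / (prA P xa * prB P xb)" for y
  proof -
    have "P xa xb y * prY P y = (\<Sum>xb'\<in>UNIV. P xa xb' y) * (\<Sum>xa'\<in>UNIV. P xa' xb y)"
      using ci unfolding cond_indep_def by blast
    then show ?thesis using posA[of xa] posB[of xb] posY[of y]
      unfolding postA_def postB_def by (simp add: field_simps)
  qed
  then show ?thesis unfolding cg_score_def Kfun_def prAB_def
    by (simp add: sum_divide_distrib[symmetric])
qed

lemma sum_prB_cg_score:
  assumes "q \<in> simplex"
  shows "(\<Sum>xb\<in>UNIV. prB P xb * cg_score P q (postB P xb)) = 1"
proof -
  have marginal: "(\<Sum>xb\<in>UNIV. prB P xb * postB P xb y) = prY P y" for y
  proof -
    have "(\<Sum>xb\<in>UNIV. prB P xb * postB P xb y) = (\<Sum>xb\<in>UNIV. \<Sum>xa\<in>UNIV. P xa xb y)"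
      using posB unfolding postB_def by (simp add: less_imp_neq[symmetric])
    also have "\<dots> = prY P y" unfolding prY_def by (rule sum.swap)
    finally show ?thesis .
  qed
  have "(\<Sum>xb\<in>UNIV. prB P xb * cg_score P q (postB P xb))
      = (\<Sum>y\<in>UNIV. q y / prY P y * (\<Sum>xb\<in>UNIV. prB P xb * postB P xb y))"
    unfolding cg_score_def sum_distrib_left
    by (subst sum.swap) (simp add: mult_ac)
  also have "\<dots> = (\<Sum>y\<in>UNIV. q y)"
    using posY by (simp add: marginal less_imp_neq[symmetric])
  finally show ?thesis using assms unfolding simplex_def by simp
qed

lemma sum_prB_Kfun: "(\<Sum>xb\<in>UNIV. prB P xb * Kfun P xa xb) = 1"
proof -
  have "(\<Sum>xb\<in>UNIV. prB P xb * Kfun P xa xb) = (\<Sum>xb\<in>UNIV. prAB P xa xb) / prA P xa"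
    using posA[of xa] by (simp add: prAB_eq sum_divide_distrib sum_distrib_left[symmetric] mult_ac)
  also have "\<dots> = 1"
    using posA[of xa] unfolding prAB_def prA_def by simp
  finally show ?thesis .
qed

lemma alice_exp_eq: "alice_exp P xa q =
    (\<Sum>xb\<in>UNIV. ereal (prB P xb * Kfun P xa xb) * ereal_ln (cg_score P q (postB P xb)))"
  unfolding alice_exp_def cg_payment_eq
  using posA by (simp add: prAB_eq less_imp_neq[symmetric])

abbreviation alice_truthful_value :: "'a \<Rightarrow> real" where
  "alice_truthful_value xa \<equiv> (\<Sum>xb\<in>UNIV. prB P xb * (Kfun P xa xb * ln (Kfun P xa xb)))"

lemma alice_exp_le_bound:
  assumes "q \<in> simplex"
  shows "alice_exp P xa q \<le> ereal (alice_truthful_value xa)"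
    and "alice_exp P xa q = ereal (alice_truthful_value xa) \<longleftrightarrow>
           (\<forall>xb. cg_score P q (postB P xb) = Kfun P xa xb)"
proof -
  have "(\<Sum>xb\<in>UNIV. prB P xb * (Kfun P xa xb * ln (Kfun P xa xb)
          + cg_score P q (postB P xb) - Kfun P xa xb)) = alice_truthful_value xa"
    using sum_prB_cg_score[OF assms] sum_prB_Kfun[of xa]
    by (simp add: algebra_simps sum.distrib sum_subtractf)
  then show "alice_exp P xa q \<le> ereal (alice_truthful_value xa)"
    and "alice_exp P xa q = ereal (alice_truthful_value xa) \<longleftrightarrow>
           (\<forall>xb. cg_score P q (postB P xb) = Kfun P xa xb)"
    using sum_ereal_ln_weighted_le[of UNIV "prB P" "Kfun P xa" "\<lambda>xb. cg_score P q (postB P xb)"]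
      posB Kfun_nonneg cg_score_nonneg[OF assms]
    unfolding alice_exp_eq by auto
qed

lemma alice_exp_truthful: "alice_exp P xa (postA P xa) = ereal (alice_truthful_value xa)"
  using alice_exp_le_bound(2)[OF postA_simplex] cg_score_truthful by simp

lemma alice_truthful_optimal:
  "q \<in> simplex \<Longrightarrow> alice_exp P xa q \<le> alice_exp P xa (postA P xa)"
  using alice_exp_le_bound(1) alice_exp_truthful by simp

lemma alice_truthful_strictly_optimal:
  assumes stable: "\<forall>a :: 'a \<Rightarrow> 'c \<Rightarrow> real. (\<forall>xa. a xa \<in> simplex) \<and>
        (\<forall>xa xb. (\<Sum>y\<in>UNIV. a xa y * postB P xb y / prY P y) = Kfun P xa xb) \<longrightarrow> a = postA P"
    and q: "q \<in> simplex" "q \<noteq> postA P xa"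
  shows "alice_exp P xa q < alice_exp P xa (postA P xa)"
proof (rule ccontr)
  assume "\<not> ?thesis"
  then have "alice_exp P xa q = ereal (alice_truthful_value xa)"
    using alice_exp_le_bound(1)[OF q(1)] alice_exp_truthful by (metis not_less order.antisym)
  then have score: "cg_score P q (postB P xb) = Kfun P xa xb" for xb
    using alice_exp_le_bound(2)[OF q(1)] by simp
  \<comment> \<open>replacing Alice's report for the single signal \<open>xa\<close> by \<open>q\<close> still solves the system\<close>
  have "(postA P)(xa := q) = postA P"
  proof (rule stable[rule_format], intro conjI allI)
    show "((postA P)(xa := q)) xa' \<in> simplex" for xa'
      using q(1) postA_simplex by simp
    show "(\<Sum>y\<in>UNIV. ((postA P)(xa := q)) xa' y * postB P xb y / prY P y) = Kfun P xa' xb"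
      for xa' xb
      using score cg_score_truthful unfolding cg_score_def by (cases "xa' = xa") auto
  qed
  then show False using q(2) by (metis fun_upd_same)
qed

lemma truthful_exp_eq_mutual_info: "truthful_exp P = ereal (mutual_info P)"
proof -
  have "ereal (prAB P xa xb) * cg_payment P (postA P xa) (postB P xb)
     = ereal (if prAB P xa xb = 0 then 0 else prAB P xa xb * ln (Kfun P xa xb))" for xa xb
  proof (cases "prAB P xa xb = 0")
    case False
    then have "Kfun P xa xb \<noteq> 0" using prAB_eq by force
    then show ?thesis
      using False unfolding cg_payment_eq cg_score_truthful ereal_ln_def by simp
  qed (simp add: zero_ereal_def[symmetric])
  then show ?thesis unfolding truthful_exp_def mutual_info_def by simp
qed

lemma mutual_info_nonneg:
  assumes total: "(\<Sum>xa\<in>UNIV. \<Sum>xb\<in>UNIV. \<Sum>y\<in>UNIV. P xa xb y) = 1"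
  shows "0 \<le> mutual_info P"
proof -
  let ?Q = "\<lambda>xa xb. prA P xa * prB P xb"
  have term_eq: "(if prAB P xa xb = 0 then 0 else prAB P xa xb * ln (Kfun P xa xb))
      = ?Q xa xb * (Kfun P xa xb * ln (Kfun P xa xb))" for xa xb
    using prAB_eq[of xa xb] posA[of xa] posB[of xb] by auto
  have sumQ: "(\<Sum>xa\<in>UNIV. \<Sum>xb\<in>UNIV. ?Q xa xb) = 1"
  proof -
    have "(\<Sum>xb\<in>UNIV. prB P xb) = (\<Sum>xa\<in>UNIV. \<Sum>xb\<in>UNIV. \<Sum>y\<in>UNIV. P xa xb y)"
      unfolding prB_def by (rule sum.swap)
    then show ?thesis
      using total unfolding prA_def by (simp add: sum_product[symmetric])
  qed
  have "(\<Sum>xa\<in>UNIV. \<Sum>xb\<in>UNIV. ?Q xa xb * Kfun P xa xb) = 1"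
    using total unfolding prAB_eq[symmetric] prAB_def .
  then have "0 = (\<Sum>xa\<in>UNIV. \<Sum>xb\<in>UNIV. ?Q xa xb * (Kfun P xa xb - 1))"
    using sumQ by (simp add: right_diff_distrib sum_subtractf)
  also have "\<dots> \<le> (\<Sum>xa\<in>UNIV. \<Sum>xb\<in>UNIV. ?Q xa xb * (Kfun P xa xb * ln (Kfun P xa xb)))"
    using posA posB Kfun_nonneg
    by (intro sum_mono mult_left_mono diff_one_le_mult_ln) (auto simp: less_imp_le)
  finally show ?thesis unfolding mutual_info_def term_eq .
qed

end

definition swap_agents :: "('a::finite \<Rightarrow> 'b::finite \<Rightarrow> 'c::finite \<Rightarrow> real) \<Rightarrow> 'b \<Rightarrow> 'a \<Rightarrow> 'c \<Rightarrow> real" where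
  "swap_agents P = (\<lambda>xb xa y. P xa xb y)"

lemma prA_swap_agents: "prA (swap_agents P) = prB P"
  unfolding swap_agents_def prA_def prB_def by (rule ext) simp

lemma prB_swap_agents: "prB (swap_agents P) = prA P"
  unfolding swap_agents_def prA_def prB_def by (rule ext) simp

lemma prY_swap_agents: "prY (swap_agents P) = prY P"
  unfolding swap_agents_def prY_def by (rule ext) (rule sum.swap)

lemma prAB_swap_agents: "prAB (swap_agents P) xb xa = prAB P xa xb"
  unfolding swap_agents_def prAB_def by simp

lemma postA_swap_agents: "postA (swap_agents P) = postB P"
  unfolding postA_def postB_def prA_swap_agents by (simp add: swap_agents_def)

lemma postB_swap_agents: "postB (swap_agents P) = postA P"
  unfolding postA_def postB_def prB_swap_agents by (simp add: swap_agents_def)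

lemma Kfun_swap_agents: "Kfun (swap_agents P) xb xa = Kfun P xa xb"
  unfolding Kfun_def prAB_swap_agents prA_swap_agents prB_swap_agents by (simp add: mult.commute)

lemma cg_payment_swap_agents: "cg_payment (swap_agents P) qa qb = cg_payment P qb qa"
  unfolding cg_payment_def prY_swap_agents by (simp add: mult.commute)

lemma bob_exp_eq_alice_exp_swap_agents: "bob_exp P xb q = alice_exp (swap_agents P) xb q"
  unfolding bob_exp_def alice_exp_def cg_payment_swap_agents prAB_swap_agents
    prA_swap_agents postB_swap_agents ..

lemma cg_prior_swap_agents:
  assumes "cg_prior P" shows "cg_prior (swap_agents P)"
proof -
  interpret cg_prior P by (fact assms)
  show ?thesis
    using nonneg posA posB posY ci
    unfolding cg_prior_def cond_indep_def prA_swap_agents prB_swap_agents prY_swap_agents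
    by (simp add: swap_agents_def mult.commute)
qed

lemma stable_prior_swap_agents: "stable_prior P \<Longrightarrow> stable_prior (swap_agents P)"
  unfolding stable_prior_def postA_swap_agents postB_swap_agents prY_swap_agents Kfun_swap_agents
  by (simp add: mult.commute)

theorem mainTheorem6:
  fixes P :: "'a::finite \<Rightarrow> 'b::finite \<Rightarrow> 'c::finite \<Rightarrow> real"
  assumes nonneg: "\<And>xa xb y. 0 \<le> P xa xb y"
    and total: "(\<Sum>xa\<in>UNIV. \<Sum>xb\<in>UNIV. \<Sum>y\<in>UNIV. P xa xb y) = 1"
    and posA: "\<And>xa. 0 < prA P xa"
    and posB: "\<And>xb. 0 < prB P xb"
    and posY: "\<And>y. 0 < prY P y"
    and ci: "cond_indep P"
  shows
    "(\<forall>xa. \<forall>q\<in>simplex. alice_exp P xa q \<le> alice_exp P xa (postA P xa)) \<and>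
     (\<forall>xb. \<forall>q\<in>simplex. bob_exp P xb q \<le> bob_exp P xb (postB P xb)) \<and>
     (stable_prior P \<longrightarrow>
        (\<forall>xa. \<forall>q\<in>simplex. q \<noteq> postA P xa \<longrightarrow> alice_exp P xa q < alice_exp P xa (postA P xa)) \<and>
        (\<forall>xb. \<forall>q\<in>simplex. q \<noteq> postB P xb \<longrightarrow> bob_exp P xb q < bob_exp P xb (postB P xb))) \<and>
     truthful_exp P = ereal (mutual_info P) \<and>
     0 \<le> mutual_info P"
proof -
  have prior: "cg_prior P" using assms by unfold_locales
  interpret A: cg_prior P by (fact prior)
  interpret B: cg_prior "swap_agents P" by (rule cg_prior_swap_agents[OF prior])
  show ?thesis
  proof (intro conjI impI ballI allI)
    show "bob_exp P xb q \<le> bob_exp P xb (postB P xb)" if "q \<in> simplex" for xb q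
      using B.alice_truthful_optimal[OF that]
      unfolding bob_exp_eq_alice_exp_swap_agents postA_swap_agents .
    show "bob_exp P xb q < bob_exp P xb (postB P xb)"
      if "stable_prior P" "q \<in> simplex" "q \<noteq> postB P xb" for xb q
      using B.alice_truthful_strictly_optimal stable_prior_swap_agents[OF that(1)] that(2,3)
      unfolding bob_exp_eq_alice_exp_swap_agents postA_swap_agents stable_prior_def by blast
    show "alice_exp P xa q < alice_exp P xa (postA P xa)"
      if "stable_prior P" "q \<in> simplex" "q \<noteq> postA P xa" for xa q
      using A.alice_truthful_strictly_optimal that unfolding stable_prior_def by blast
  qed (use A.alice_truthful_optimal A.truthful_exp_eq_mutual_info
         A.mutual_info_nonneg[OF total] in auto)
qed

end
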